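(* Let $\mathcal H$ be a real Hilbert space, $t_0>0$, and let $f:\mathcal H\to\mathbb R$ be a convex $\mathcal C^2(\mathcal H)$ function which is bounded from below. Let $e:[t_0,+\infty[\to\mathcal H$ be continuously differentiable with $\int_{t_0}^{+\infty}\|e(t)\|dt<+\infty$ and $\int_{t_0}^{+\infty}\|\dot e(t)\|dt<+\infty$. Let $\alpha,\beta>0$. Let $x:[t_0,+\infty[\to\mathcal H$ be a solution trajectory of $$\ddot x(t)+\frac{\alpha}{t}\dot x(t)+\beta\frac{d}{dt}\big(\nabla f(x(t))+e(t)\big)+\nabla f(x(t))+e(t)=0,$$ and define $u(t):=x(t)+\beta\int_{t_0}^t\nabla f(x(s))ds$. Then: (i) $\sup_{t\ge t_0}\|\dot u(t)\|<+\infty$; (ii) $\int_{t_0}^{+\infty}\frac1t\|\dot x(t)\|^2dt<+\infty$, $\int_{t_0}^{+\infty}\|\nabla f(x(t))\|^2dt<+\infty$, $\int_{t_0}^{+\infty}\frac1t\|\dot u(t)\|^2dt<+\infty$; (iii) $\lim_{t\to+\infty}\|\dot u(t)\|=0$, $\lim_{t\to+\infty}\|\dot x(t)\|=0$, $\lim_{t\to+\infty}\|\nabla f(x(t))\|=0$; (iv) $\lim_{t\to+\infty}f(x(t))=\inf_{\mathcal H}f$.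
   Context: The set of minimizers of $f$ may be empty here. *)

theory Defs
  imports "HOL-Analysis.Analysis"
begin

end

theory Submission
  imports Defs
begin

(*
  Write u' = x' + beta grad f(x) for the derivative of u.  The equation becomes
  u'' = -(alpha/t) x' - grad f(x) - err with the integrable perturbation err = e + beta e'.
  Two Lyapunov functions are perturbed only through err: the energy |x'|^2/2 + f(x), whose
  derivative is at most |err| |x'| - (alpha/t) |x'|^2 because the Hessian of the convex f is
  positive semidefinite, and, for t >= t0 + 2 alpha beta, the function
  |u'|^2/2 + (1 - alpha beta/t) (f(x) - inf f) + C/t, whose derivative is at most
  |err| |u'| - (alpha/t) |u'|^2 - (beta/2) |grad f(x)|^2.  In both cases the velocity is
  bounded by 1 plus the function itself, so Gronwall's inequality bounds the function; then the
  dissipation terms are integrable and the function converges.  This gives (i) and (ii).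
  The energy tends to inf f: if it stayed above f(z) + kappa, then by convexity
  <u', x - z> + alpha |x - z|^2 / (2t) would decrease at rate kappa up to integrable terms,
  whereas it is bounded below by -(sup |u'|) |x - z|, and |x - z| grows sublinearly because
  |x'|^2/t is integrable.  Hence f(x) -> inf f and |x'| -> 0; |u'|^2 has a limit, which vanishes
  because |u'|^2/t is integrable; and grad f(x) = (u' - x')/beta -> 0.
*)

section \<open>Integrals in complete normed spaces\<close>

(* The library's fundamental theorem of calculus for integrals is stated for the class banach,
   to which a type of sort {real_normed_vector, complete_space} does not belong syntactically;
   it is transferred through an isomorphic copy of the type that is an instance of banach. *)

typedef 'a banach_copy = "UNIV :: 'a set" morphisms unwrap wrap ..

setup_lifting type_definition_banach_copy

lemma unwrap_wrap [simp]: "unwrap (wrap a) = a"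
  by (simp add: wrap_inverse)

instantiation banach_copy :: (real_normed_vector) real_normed_vector
begin

lift_definition zero_banach_copy :: "'a banach_copy" is 0 .
lift_definition plus_banach_copy :: "'a banach_copy \<Rightarrow> 'a banach_copy \<Rightarrow> 'a banach_copy" is "(+)" .
lift_definition minus_banach_copy :: "'a banach_copy \<Rightarrow> 'a banach_copy \<Rightarrow> 'a banach_copy" is "(-)" .
lift_definition uminus_banach_copy :: "'a banach_copy \<Rightarrow> 'a banach_copy" is uminus .
lift_definition scaleR_banach_copy :: "real \<Rightarrow> 'a banach_copy \<Rightarrow> 'a banach_copy" is scaleR .
lift_definition norm_banach_copy :: "'a banach_copy \<Rightarrow> real" is norm .
lift_definition sgn_banach_copy :: "'a banach_copy \<Rightarrow> 'a banach_copy" is sgn .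
lift_definition dist_banach_copy :: "'a banach_copy \<Rightarrow> 'a banach_copy \<Rightarrow> real" is dist .

definition uniformity_banach_copy :: "('a banach_copy \<times> 'a banach_copy) filter"
  where "uniformity_banach_copy = (INF e\<in>{0<..}. principal {(x, y). dist x y < e})"

definition open_banach_copy :: "'a banach_copy set \<Rightarrow> bool"
  where "open_banach_copy U \<longleftrightarrow> (\<forall>x\<in>U. \<forall>\<^sub>F (x', y) in uniformity. x' = x \<longrightarrow> y \<in> U)"

instance
  by standard (transfer; auto simp: algebra_simps dist_norm sgn_div_norm norm_triangle_ineq
      uniformity_banach_copy_def open_banach_copy_def)+

end

lemma dist_unwrap [simp]: "dist (unwrap a) (unwrap b) = dist a b"
  by transfer simp

instance banach_copy :: ("{real_normed_vector,complete_space}") banach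
proof
  fix X :: "nat \<Rightarrow> 'a banach_copy"
  assume "Cauchy X"
  then have "Cauchy (unwrap \<circ> X)"
    by (simp add: Cauchy_def)
  then obtain l where "(unwrap \<circ> X) \<longlonglongrightarrow> l"
    using Cauchy_convergent convergent_def by blast
  then have "X \<longlonglongrightarrow> wrap l"
    by (simp add: lim_sequentially flip: dist_unwrap)
  then show "convergent X"
    by (auto simp: convergent_def)
qed

lemma bounded_linear_unwrap: "bounded_linear unwrap"
  by (rule bounded_linear_intro[where K = 1]; transfer) auto

lemma integral_has_vector_derivative_complete:
  fixes f :: "real \<Rightarrow> 'a::{real_normed_vector,complete_space}"
  assumes "continuous_on {a..b} f" and "t \<in> {a..b}"
  shows "((\<lambda>s. integral {a..s} f) has_vector_derivative f t) (at t within {a..b})"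
proof -
  have cont: "continuous_on {a..b} (wrap \<circ> f)"
    using assms(1) unfolding continuous_on_def tendsto_iff by (simp flip: dist_unwrap)
  have "((\<lambda>s. unwrap (integral {a..s} (wrap \<circ> f))) has_vector_derivative unwrap ((wrap \<circ> f) t))
      (at t within {a..b})"
    using bounded_linear.has_vector_derivative[OF bounded_linear_unwrap
        integral_has_vector_derivative[OF cont assms(2)]] .
  then have deriv: "((\<lambda>s. unwrap (integral {a..s} (wrap \<circ> f))) has_vector_derivative f t)
      (at t within {a..b})"
    by simp
  have "unwrap (integral {a..s} (wrap \<circ> f)) = integral {a..s} f" if "s \<in> {a..b}" for s
    using integral_linear[OF integrable_continuous_interval bounded_linear_unwrap,
        OF continuous_on_subset[OF cont]] that
    by (simp add: o_def)
  then show ?thesis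
    by (rule has_vector_derivative_transform_within[OF deriv zero_less_one assms(2)])
qed

section \<open>Estimates for real functions on a half-line\<close>

lemma integrable_on_Icc_of_continuous_on_atLeast:
  fixes h :: "real \<Rightarrow> 'b::banach"
  assumes "continuous_on {a..} h" and "a \<le> c"
  shows "h integrable_on {c..d}"
  using assms by (intro integrable_continuous_interval) (auto elim!: continuous_on_subset)

lemma increment_le_integral_of_derivative_le:
  fixes \<phi> \<phi>' \<psi> :: "real \<Rightarrow> real"
  assumes "a \<le> b" and "{a..b} \<subseteq> S"
    and deriv: "\<And>s. s \<in> {a..b} \<Longrightarrow> (\<phi> has_real_derivative \<phi>' s) (at s within S)"
    and le: "\<And>s. s \<in> {a..b} \<Longrightarrow> \<phi>' s \<le> \<psi> s"
    and "(\<psi> has_integral I) {a..b}"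
  shows "\<phi> b - \<phi> a \<le> I"
proof -
  have "(\<phi>' has_integral (\<phi> b - \<phi> a)) {a..b}"
    using assms(1,2) deriv
    by (intro fundamental_theorem_of_calculus)
      (auto simp flip: has_real_derivative_iff_has_vector_derivative intro: DERIV_subset)
  then show ?thesis
    using has_integral_le[OF _ assms(5) le] by blast
qed

lemma mono_bounded_tendsto_at_top:
  fixes \<phi> :: "real \<Rightarrow> real"
  assumes mono: "\<And>s t. a \<le> s \<Longrightarrow> s \<le> t \<Longrightarrow> \<phi> s \<le> \<phi> t"
    and bound: "\<And>t. a \<le> t \<Longrightarrow> \<phi> t \<le> B"
  shows "(\<phi> \<longlongrightarrow> (SUP t\<in>{a..}. \<phi> t)) at_top"
proof -
  have bdd: "bdd_above (\<phi> ` {a..})"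
    using bound by (auto intro!: bdd_aboveI)
  show ?thesis
  proof (rule order_tendstoI)
    fix y assume "y < (SUP t\<in>{a..}. \<phi> t)"
    then obtain t where "t \<ge> a" "y < \<phi> t"
      using less_cSUP_iff[OF _ bdd] by auto
    then show "\<forall>\<^sub>F s in at_top. y < \<phi> s"
      unfolding eventually_at_top_linorder using mono by (auto intro: less_le_trans)
  next
    fix y assume "(SUP t\<in>{a..}. \<phi> t) < y"
    then show "\<forall>\<^sub>F s in at_top. \<phi> s < y"
      unfolding eventually_at_top_linorder using cSUP_upper[OF _ bdd] by (auto intro: le_less_trans)
  qed
qed

lemma antimono_bounded_convergent_at_top:
  fixes \<phi> :: "real \<Rightarrow> real"
  assumes "\<And>s t. a \<le> s \<Longrightarrow> s \<le> t \<Longrightarrow> \<phi> t \<le> \<phi> s"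
    and "\<And>t. a \<le> t \<Longrightarrow> B \<le> \<phi> t"
  shows "\<exists>L. (\<phi> \<longlongrightarrow> L) at_top"
proof -
  have "((\<lambda>t. - \<phi> t) \<longlongrightarrow> (SUP t\<in>{a..}. - \<phi> t)) at_top"
    using assms by (intro mono_bounded_tendsto_at_top[where B = "- B"]) auto
  then show ?thesis
    using tendsto_minus by fastforce
qed

lemma integral_atLeast_mono:
  fixes h :: "real \<Rightarrow> real"
  assumes "continuous_on {a..} h" and "\<And>t. t \<ge> a \<Longrightarrow> h t \<ge> 0" and "s \<le> t"
  shows "integral {a..s} h \<le> integral {a..t} h"
  using assms by (intro integral_subset_le integrable_on_Icc_of_continuous_on_atLeast) auto

lemma integrable_on_atLeast_of_bounded_integrals:
  fixes h :: "real \<Rightarrow> real"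
  assumes cont: "continuous_on {a..} h" and nonneg: "\<And>t. t \<ge> a \<Longrightarrow> h t \<ge> 0"
    and "\<And>t. t \<ge> a \<Longrightarrow> integral {a..t} h \<le> B"
  shows "h integrable_on {a..}"
proof -
  have "((\<lambda>t. integral {a..t} h) \<longlongrightarrow> (SUP t\<in>{a..}. integral {a..t} h)) at_top"
    using assms by (intro mono_bounded_tendsto_at_top integral_atLeast_mono) auto
  then show ?thesis
    using has_integral_to_inf integrable_on_Icc_of_continuous_on_atLeast[OF cont] nonneg
    by blast
qed

lemma integrable_on_atLeast_extend:
  fixes h :: "real \<Rightarrow> real"
  assumes "continuous_on {a..} h" and "a \<le> b" and "h integrable_on {b..}"
  shows "h integrable_on {a..}"
proof -
  have "{a..} = {a..b} \<union> {b..}" and "{a..b} \<inter> {b..} = {b}"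
    using assms(2) by auto
  then show ?thesis
    using assms integrable_on_Icc_of_continuous_on_atLeast integrable_Un
    by (metis negligible_sing order.refl)
qed

lemma integrable_on_atLeast_of_le_integrable:
  fixes h H :: "real \<Rightarrow> real"
  assumes cont: "continuous_on {a..} h" and nonneg: "\<And>t. t \<ge> a \<Longrightarrow> 0 \<le> h t"
    and le: "\<And>t. t \<ge> a \<Longrightarrow> h t \<le> H t" and int: "H integrable_on {a..}"
  shows "h integrable_on {a..}"
proof (rule integrable_on_atLeast_of_bounded_integrals[OF cont nonneg])
  fix t assume "t \<ge> a"
  have "H integrable_on {a..t}"
    by (rule integrable_on_subinterval[OF int]) auto
  then have "integral {a..t} h \<le> integral {a..t} H"
    using le by (intro integral_le integrable_on_Icc_of_continuous_on_atLeast[OF cont]) auto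
  also have "\<dots> \<le> integral {a..} H"
    using nonneg le \<open>H integrable_on {a..t}\<close>
    by (intro integral_subset_le int) (auto intro: order_trans)
  finally show "integral {a..t} h \<le> integral {a..} H" .
qed

lemma integral_tail_le:
  fixes h :: "real \<Rightarrow> real"
  assumes cont: "continuous_on {a..} h" and "\<And>t. t \<ge> a \<Longrightarrow> h t \<ge> 0"
    and "h integrable_on {a..}" and "\<eta> > 0" and "a \<le> b"
  obtains T where "T \<ge> b" and "\<And>t. t \<ge> T \<Longrightarrow> integral {T..t} h \<le> \<eta>"
proof -
  define L where "L = (SUP t\<in>{a..}. integral {a..t} h)"
  have le_L: "integral {a..t} h \<le> L" if "t \<ge> a" for t
    unfolding L_def using assms that
    by (intro cSUP_upper bdd_aboveI[where M = "integral {a..} h"])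
      (auto intro!: integral_subset_le integrable_on_Icc_of_continuous_on_atLeast)
  have "((\<lambda>t. integral {a..t} h) \<longlongrightarrow> L) at_top"
    unfolding L_def using assms le_L
    by (intro mono_bounded_tendsto_at_top integral_atLeast_mono) auto
  from order_tendstoD(1)[OF this, of "L - \<eta>"] \<open>\<eta> > 0\<close>
  obtain T0 where T0: "\<And>t. t \<ge> T0 \<Longrightarrow> L - \<eta> < integral {a..t} h"
    by (auto simp: eventually_at_top_linorder)
  show thesis
  proof (rule that[of "max b T0"])
    fix t assume t: "t \<ge> max b T0"
    have "integral {a..max b T0} h + integral {max b T0..t} h = integral {a..t} h"
      using t \<open>a \<le> b\<close> by (intro Henstock_Kurzweil_Integration.integral_combine
          integrable_on_Icc_of_continuous_on_atLeast[OF cont]) auto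
    then show "integral {max b T0..t} h \<le> \<eta>"
      using T0[of "max b T0"] le_L[of t] t \<open>a \<le> b\<close> by auto
  qed simp
qed

lemma gronwall_atLeast:
  fixes \<phi> \<phi>' k :: "real \<Rightarrow> real"
  assumes deriv: "\<And>s. s \<ge> a \<Longrightarrow> (\<phi> has_real_derivative \<phi>' s) (at s within {a..})"
    and le: "\<And>s. s \<ge> a \<Longrightarrow> \<phi>' s \<le> k s * \<phi> s"
    and cont: "continuous_on {a..} k" and "t \<ge> a"
  shows "\<phi> t \<le> \<phi> a * exp (integral {a..t} k)"
proof -
  define \<Phi> where "\<Phi> s = \<phi> s * exp (- integral {a..s} k)" for s
  have "\<Phi> t - \<Phi> a \<le> integral {a..t} (\<lambda>_. 0)"
  proof (rule increment_le_integral_of_derivative_le[OF \<open>t \<ge> a\<close> order.refl])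
    fix s assume s: "s \<in> {a..t}"
    have "((\<lambda>s. integral {a..s} k) has_real_derivative k s) (at s within {a..t})"
      using s by (intro integral_has_real_derivative continuous_on_subset[OF cont]) auto
    moreover have "(\<phi> has_real_derivative \<phi>' s) (at s within {a..t})"
      using s by (auto intro: DERIV_subset[OF deriv])
    ultimately show "(\<Phi> has_real_derivative (\<phi>' s - k s * \<phi> s) * exp (- integral {a..s} k))
        (at s within {a..t})"
      unfolding \<Phi>_def by (auto intro!: derivative_eq_intros simp: algebra_simps)
    show "(\<phi>' s - k s * \<phi> s) * exp (- integral {a..s} k) \<le> 0"
      using le[of s] s by (simp add: mult_nonpos_nonneg)
  qed auto
  then show ?thesis
    by (simp add: \<Phi>_def exp_minus field_simps)
qed

lemma convergent_of_derivative_le_integrable: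
  fixes \<phi> \<phi>' k :: "real \<Rightarrow> real"
  assumes deriv: "\<And>s. s \<ge> a \<Longrightarrow> (\<phi> has_real_derivative \<phi>' s) (at s within {a..})"
    and le: "\<And>s. s \<ge> a \<Longrightarrow> \<phi>' s \<le> k s"
    and cont: "continuous_on {a..} k" and nonneg: "\<And>s. s \<ge> a \<Longrightarrow> k s \<ge> 0"
    and k_bound: "\<And>t. t \<ge> a \<Longrightarrow> integral {a..t} k \<le> K"
    and lower: "\<And>t. t \<ge> a \<Longrightarrow> B \<le> \<phi> t"
  shows "\<exists>L. (\<phi> \<longlongrightarrow> L) at_top"
proof -
  define I where "I t = integral {a..t} k" for t
  have int: "k integrable_on {s..t}" if "s \<ge> a" for s t
    using integrable_on_Icc_of_continuous_on_atLeast[OF cont that] .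
  have "\<exists>L. ((\<lambda>t. \<phi> t - I t) \<longlongrightarrow> L) at_top"
  proof (rule antimono_bounded_convergent_at_top[where B = "B - K"])
    fix s t assume st: "a \<le> s" "s \<le> t"
    have "\<phi> t - \<phi> s \<le> integral {s..t} k"
      using st
      by (intro increment_le_integral_of_derivative_le[OF _ _ deriv le] integrable_integral int)
        auto
    moreover have "I s + integral {s..t} k = I t"
      unfolding I_def using st by (intro Henstock_Kurzweil_Integration.integral_combine int) auto
    ultimately show "\<phi> t - I t \<le> \<phi> s - I s"
      by linarith
  qed (use lower k_bound I_def in fastforce)
  moreover have "(I \<longlongrightarrow> (SUP t\<in>{a..}. I t)) at_top"
    unfolding I_def using k_bound
    by (intro mono_bounded_tendsto_at_top integral_atLeast_mono cont nonneg)
  ultimately show ?thesis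
    using tendsto_add[of "\<lambda>t. \<phi> t - I t" _ at_top I] by fastforce
qed

lemma integral_inverse_weighted_ge_log:
  fixes w :: "real \<Rightarrow> real"
  assumes "0 < T" and "T \<le> t" and "continuous_on {T..t} w" and "\<And>s. s \<in> {T..t} \<Longrightarrow> c \<le> w s"
  shows "c * (ln t - ln T) \<le> integral {T..t} (\<lambda>s. w s / s)"
proof -
  have "((\<lambda>s. c * (1 / s)) has_integral c * (ln t - ln T)) {T..t}"
    using assms(1,2)
    by (intro has_integral_mult_right fundamental_theorem_of_calculus)
      (auto intro!: derivative_eq_intros simp flip: has_real_derivative_iff_has_vector_derivative)
  moreover have "(\<lambda>s. w s / s) integrable_on {T..t}"
    using assms(1,3) by (intro integrable_continuous_interval continuous_intros) auto
  moreover have "c * (1 / s) \<le> w s / s" if "s \<in> {T..t}" for s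
    using assms(1) assms(4)[OF that] that divide_right_mono[of c "w s" s] by auto
  ultimately show ?thesis
    by (intro has_integral_le[OF _ integrable_integral])
qed

lemma tendsto_zero_of_inverse_weighted_integrable:
  fixes w :: "real \<Rightarrow> real"
  assumes "a > 0" and cont: "continuous_on {a..} w" and nonneg: "\<And>t. t \<ge> a \<Longrightarrow> w t \<ge> 0"
    and int: "(\<lambda>t. w t / t) integrable_on {a..}"
    and lim: "(w \<longlongrightarrow> L) at_top"
  shows "L = 0"
proof (rule ccontr)
  assume "L \<noteq> 0"
  moreover have "L \<ge> 0"
    using nonneg by (intro tendsto_lowerbound[OF lim]) (auto simp: eventually_at_top_linorder)
  ultimately have "L > 0" by simp
  from order_tendstoD(1)[OF lim, of "L / 2"] \<open>L > 0\<close>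
  obtain T0 where T0: "\<And>t. t \<ge> T0 \<Longrightarrow> L / 2 < w t"
    by (auto simp: eventually_at_top_linorder)
  define T where "T = max a T0"
  define I where "I = integral {a..} (\<lambda>t. w t / t)"
  have "T > 0"
    using \<open>a > 0\<close> by (simp add: T_def)
  have cont': "continuous_on {a..} (\<lambda>t. w t / t)"
    using \<open>a > 0\<close> by (intro continuous_intros cont) auto
  have log_bound: "L / 2 * (ln t - ln T) \<le> I" if "t \<ge> T" for t
  proof -
    have "L / 2 \<le> w s" if "s \<in> {T..t}" for s
      using T0[of s] that by (simp add: T_def)
    then have "L / 2 * (ln t - ln T) \<le> integral {T..t} (\<lambda>s. w s / s)"
      using \<open>T > 0\<close> that
      by (intro integral_inverse_weighted_ge_log continuous_on_subset[OF cont]) (auto simp: T_def)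
    also have "\<dots> \<le> I"
      unfolding I_def using \<open>a > 0\<close> nonneg
      by (intro integral_subset_le int integrable_on_Icc_of_continuous_on_atLeast[OF cont'])
        (auto simp: T_def)
    finally show ?thesis .
  qed
  define t where "t = T * exp (2 * (\<bar>I\<bar> + 1) / L)"
  have "t \<ge> T" and "ln t - ln T = 2 * (\<bar>I\<bar> + 1) / L"
    using \<open>T > 0\<close> \<open>L > 0\<close> by (auto simp: t_def ln_mult)
  then show False
    using log_bound[of t] \<open>L > 0\<close> by simp
qed

lemma le_half_plus_square_div:
  fixes w \<epsilon> :: real
  assumes "\<epsilon> > 0"
  shows "w \<le> \<epsilon> / 2 + w\<^sup>2 / (2 * \<epsilon>)"
proof -
  have "0 \<le> (w - \<epsilon>)\<^sup>2"
    by simp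
  then show ?thesis
    using assms by (simp add: field_simps power2_eq_square algebra_simps)
qed

lemma integral_le_of_inverse_weighted:
  fixes h :: "real \<Rightarrow> real"
  assumes "0 < T" and "T \<le> t" and "continuous_on {T..t} h"
    and nonneg: "\<And>s. s \<in> {T..t} \<Longrightarrow> 0 \<le> h s"
  shows "integral {T..t} h \<le> t * integral {T..t} (\<lambda>s. h s / s)"
proof -
  have "integral {T..t} h \<le> integral {T..t} (\<lambda>s. t * (h s / s))"
  proof (rule integral_le)
    fix s assume s: "s \<in> {T..t}"
    then have "1 \<le> t / s"
      using \<open>0 < T\<close> by auto
    from mult_right_mono[OF this nonneg[OF s]]
    show "h s \<le> t * (h s / s)"
      by simp
  qed (use assms in \<open>auto intro!: integrable_continuous_interval continuous_intros\<close>)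
  then show ?thesis
    by (simp only: integral_mult_right)
qed

lemma integral_le_integral_square:
  fixes w :: "real \<Rightarrow> real"
  assumes "T \<le> t" and cont: "continuous_on {T..t} w" and "\<epsilon> > 0"
  shows "integral {T..t} w \<le> \<epsilon> / 2 * (t - T) + integral {T..t} (\<lambda>s. (w s)\<^sup>2) / (2 * \<epsilon>)"
proof -
  have "((\<lambda>s. \<epsilon> / 2) has_integral \<epsilon> / 2 * (t - T)) {T..t}"
    using has_integral_const_real[of "\<epsilon> / 2" T t] \<open>T \<le> t\<close> by (simp add: mult.commute)
  moreover have "(\<lambda>s. (w s)\<^sup>2) integrable_on {T..t}"
    by (intro integrable_continuous_interval continuous_intros cont)
  ultimately have "((\<lambda>s. \<epsilon> / 2 + (w s)\<^sup>2 / (2 * \<epsilon>)) has_integral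
      \<epsilon> / 2 * (t - T) + integral {T..t} (\<lambda>s. (w s)\<^sup>2) / (2 * \<epsilon>)) {T..t}"
    by (intro has_integral_add has_integral_divide integrable_integral)
  then show ?thesis
    using le_half_plus_square_div[OF \<open>\<epsilon> > 0\<close>]
    by (intro has_integral_le[OF integrable_integral] integrable_continuous_interval cont)
qed

lemma integrals_sublinear_of_inverse_weighted_square_integrable:
  fixes w :: "real \<Rightarrow> real"
  assumes "a > 0" and cont: "continuous_on {a..} w"
    and int: "(\<lambda>t. (w t)\<^sup>2 / t) integrable_on {a..}" and "\<epsilon> > 0" and "a \<le> b"
  obtains T where "T \<ge> b"
    and "\<And>t. t \<ge> T \<Longrightarrow> integral {T..t} (\<lambda>s. (w s)\<^sup>2) \<le> \<epsilon> * t"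
    and "\<And>t. t \<ge> T \<Longrightarrow> integral {T..t} w \<le> \<epsilon> * t"
proof -
  define \<eta> where "\<eta> = min \<epsilon> (\<epsilon>\<^sup>2)"
  have "\<eta> > 0" and "\<eta> \<le> \<epsilon>" and "\<eta> \<le> \<epsilon>\<^sup>2"
    using \<open>\<epsilon> > 0\<close> by (auto simp: \<eta>_def)
  have cont_wsq: "continuous_on {a..} (\<lambda>t. (w t)\<^sup>2 / t)"
    using \<open>a > 0\<close> by (intro continuous_intros cont) auto
  obtain T where "T \<ge> b" and tail: "\<And>t. t \<ge> T \<Longrightarrow> integral {T..t} (\<lambda>s. (w s)\<^sup>2 / s) \<le> \<eta>"
    using integral_tail_le[OF cont_wsq _ int \<open>\<eta> > 0\<close> \<open>a \<le> b\<close>] \<open>a > 0\<close> by auto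
  show thesis
  proof (rule that[OF \<open>T \<ge> b\<close>])
    fix t assume "t \<ge> T"
    have "continuous_on {T..t} w" and "0 < T"
      using \<open>T \<ge> b\<close> \<open>a \<le> b\<close> \<open>a > 0\<close> by (auto intro: continuous_on_subset[OF cont])
    then have "integral {T..t} (\<lambda>s. (w s)\<^sup>2) \<le> t * integral {T..t} (\<lambda>s. (w s)\<^sup>2 / s)"
      using \<open>t \<ge> T\<close> by (intro integral_le_of_inverse_weighted continuous_intros) auto
    also have "\<dots> \<le> \<eta> * t"
      using tail[OF \<open>t \<ge> T\<close>] \<open>t \<ge> T\<close> \<open>0 < T\<close> mult_left_mono[of _ \<eta> t] by (simp add: mult.commute)
    finally have square: "integral {T..t} (\<lambda>s. (w s)\<^sup>2) \<le> \<eta> * t" .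
    then show "integral {T..t} (\<lambda>s. (w s)\<^sup>2) \<le> \<epsilon> * t"
      using mult_right_mono[OF \<open>\<eta> \<le> \<epsilon>\<close>, of t] \<open>t \<ge> T\<close> \<open>0 < T\<close> by linarith
    have "integral {T..t} w \<le> \<epsilon> / 2 * (t - T) + \<eta> * t / (2 * \<epsilon>)"
      using integral_le_integral_square[OF \<open>t \<ge> T\<close> \<open>continuous_on {T..t} w\<close> \<open>\<epsilon> > 0\<close>]
        divide_right_mono[OF square, of "2 * \<epsilon>"] \<open>\<epsilon> > 0\<close> by linarith
    also have "\<dots> \<le> \<epsilon> / 2 * t + \<epsilon>\<^sup>2 * t / (2 * \<epsilon>)"
      using \<open>\<eta> \<le> \<epsilon>\<^sup>2\<close> \<open>\<epsilon> > 0\<close> \<open>t \<ge> T\<close> \<open>0 < T\<close>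
      by (intro add_mono divide_right_mono mult_right_mono) auto
    also have "\<dots> = \<epsilon> * t"
      using \<open>\<epsilon> > 0\<close> by (simp add: power2_eq_square field_simps)
    finally show "integral {T..t} w \<le> \<epsilon> * t" .
  qed
qed

lemma tendsto_norm_zero_of_square:
  fixes g :: "'b \<Rightarrow> 'a::real_normed_vector"
  assumes "((\<lambda>t. (norm (g t))\<^sup>2) \<longlongrightarrow> 0) F"
  shows "((\<lambda>t. norm (g t)) \<longlongrightarrow> 0) F"
  using tendsto_real_sqrt[OF assms] by simp

lemma at_within_atLeast_neq_bot:
  fixes a t :: real
  assumes "a \<le> t"
  shows "at t within {a..} \<noteq> bot"
proof -
  have "t islimpt {a..}"
    using assms islimpt_Icc[of a "t + 1"] islimpt_subset[of t "{a..t + 1}" "{a..}"] by auto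
  then show ?thesis
    using trivial_limit_within by blast
qed

lemma continuous_on_atLeast_of_has_vector_derivative:
  assumes "\<And>t. t \<ge> a \<Longrightarrow> (p has_vector_derivative p' t) (at t within {a..})"
  shows "continuous_on {a..} p"
  using assms
  by (auto simp: continuous_on_eq_continuous_within intro: has_vector_derivative_continuous)

lemma has_real_derivative_inner:
  assumes "(p has_vector_derivative p') (at t within S)"
    and "(q has_vector_derivative q') (at t within S)"
  shows "((\<lambda>s. p s \<bullet> q s) has_real_derivative (p t \<bullet> q' + p' \<bullet> q t)) (at t within S)"
  using bounded_bilinear.has_vector_derivative[OF bounded_bilinear_inner assms]
  by (simp add: has_real_derivative_iff_has_vector_derivative)

lemma norm_le_integral_norm_derivative:
  fixes p p' :: "real \<Rightarrow> 'a::real_inner"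
  assumes "a \<le> b"
    and deriv: "\<And>r. r \<in> {a..b} \<Longrightarrow> (p has_vector_derivative p' r) (at r within {a..b})"
    and int: "(\<lambda>r. norm (p' r)) integrable_on {a..b}"
  shows "norm (p b) \<le> norm (p a) + integral {a..b} (\<lambda>r. norm (p' r))"
proof (rule field_le_epsilon)
  fix c :: real assume "c > 0"
  \<comment> \<open>a smooth substitute for the norm, which need not be differentiable at 0\<close>
  define \<phi> where "\<phi> r = sqrt (p r \<bullet> p r + c\<^sup>2)" for r
  have norm_le: "norm (p r) \<le> \<phi> r" for r
    unfolding \<phi>_def norm_eq_sqrt_inner by simp
  have "\<phi> b - \<phi> a \<le> integral {a..b} (\<lambda>r. norm (p' r))"
  proof (rule increment_le_integral_of_derivative_le[OF assms(1) order.refl _ _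
        integrable_integral[OF int]])
    fix r assume r: "r \<in> {a..b}"
    have "p r \<bullet> p r + c\<^sup>2 > 0"
      using \<open>c > 0\<close> by (simp add: add_nonneg_pos)
    with has_real_derivative_inner[OF deriv[OF r] deriv[OF r]]
    show "(\<phi> has_real_derivative (p r \<bullet> p' r) / \<phi> r) (at r within {a..b})"
      unfolding \<phi>_def by (auto intro!: derivative_eq_intros simp: inner_commute field_simps)
    have "p r \<bullet> p' r \<le> \<phi> r * norm (p' r)"
      using norm_cauchy_schwarz[of "p r" "p' r"] mult_right_mono[OF norm_le[of r], of "norm (p' r)"]
      by simp
    moreover have "\<phi> r > 0"
      using \<open>c > 0\<close> by (simp add: \<phi>_def add_nonneg_pos)
    ultimately show "(p r \<bullet> p' r) / \<phi> r \<le> norm (p' r)"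
      by (simp add: divide_le_eq mult.commute)
  qed
  moreover have "\<phi> a \<le> norm (p a) + c"
    unfolding \<phi>_def using \<open>c > 0\<close>
    by (intro real_le_lsqrt)
      (auto simp: power2_eq_square algebra_simps simp flip: power2_norm_eq_inner)
  ultimately show "norm (p b) \<le> norm (p a) + integral {a..b} (\<lambda>r. norm (p' r)) + c"
    using norm_le[of b] by linarith
qed

section \<open>Convex differentiable functions\<close>

lemma convex_on_gradient_inequality:
  fixes f :: "'a::real_inner \<Rightarrow> real"
  assumes convex: "convex_on UNIV f" and grad: "\<And>y. (f has_derivative (\<lambda>h. gf y \<bullet> h)) (at y)"
  shows "f a + gf a \<bullet> (b - a) \<le> f b"
proof -
  define \<phi> where "\<phi> s = f (a + s *\<^sub>R (b - a))" for s
  have "convex_on UNIV \<phi>"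
  proof (rule convex_onI)
    fix t x y :: real assume t: "0 < t" "t < 1"
    have "\<phi> ((1 - t) *\<^sub>R x + t *\<^sub>R y)
        = f ((1 - t) *\<^sub>R (a + x *\<^sub>R (b - a)) + t *\<^sub>R (a + y *\<^sub>R (b - a)))"
      unfolding \<phi>_def by (simp add: algebra_simps)
    also have "\<dots> \<le> (1 - t) * \<phi> x + t * \<phi> y"
      unfolding \<phi>_def using t by (intro convex_onD[OF convex]) auto
    finally show "\<phi> ((1 - t) *\<^sub>R x + t *\<^sub>R y) \<le> (1 - t) * \<phi> x + t * \<phi> y" .
  qed simp
  moreover have "(\<phi> has_real_derivative gf a \<bullet> (b - a)) (at 0)"
  proof -
    have "((\<lambda>s. a + s *\<^sub>R (b - a)) has_derivative (\<lambda>s. s *\<^sub>R (b - a))) (at 0)"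
      by (auto intro!: derivative_eq_intros)
    from has_derivative_compose[OF this, of f "\<lambda>h. gf a \<bullet> h"] grad[of a]
    have "(\<phi> has_derivative (\<lambda>s. gf a \<bullet> (s *\<^sub>R (b - a)))) (at 0)"
      unfolding \<phi>_def by (simp add: o_def)
    moreover have "(\<lambda>s. gf a \<bullet> (s *\<^sub>R (b - a))) = (*) (gf a \<bullet> (b - a))"
      by (auto simp: fun_eq_iff)
    ultimately show ?thesis
      unfolding has_field_derivative_def by simp
  qed
  ultimately have "\<phi> 1 - \<phi> 0 \<ge> gf a \<bullet> (b - a) * (1 - 0)"
    by (intro convex_on_imp_above_tangent) auto
  then show ?thesis
    by (simp add: \<phi>_def)
qed

lemma convex_on_gradient_monotone:
  fixes f :: "'a::real_inner \<Rightarrow> real"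
  assumes "convex_on UNIV f" and "\<And>y. (f has_derivative (\<lambda>h. gf y \<bullet> h)) (at y)"
  shows "0 \<le> (gf a - gf b) \<bullet> (a - b)"
  using convex_on_gradient_inequality[OF assms, of a b]
    convex_on_gradient_inequality[OF assms, of b a]
  by (simp add: inner_diff_left inner_diff_right inner_commute)

lemma convex_on_hessian_nonneg:
  fixes f :: "'a::real_inner \<Rightarrow> real"
  assumes convex: "convex_on UNIV f" and grad: "\<And>y. (f has_derivative (\<lambda>h. gf y \<bullet> h)) (at y)"
    and hess: "\<And>y. (gf has_derivative blinfun_apply (Hf y)) (at y)"
  shows "0 \<le> Hf y v \<bullet> v"
proof (rule ccontr)
  assume "\<not> 0 \<le> Hf y v \<bullet> v"
  define \<phi> where "\<phi> s = gf (y + s *\<^sub>R v) \<bullet> v" for s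
  have deriv: "(\<phi> has_real_derivative Hf y v \<bullet> v) (at 0)"
  proof -
    have "((\<lambda>s. y + s *\<^sub>R v) has_derivative (\<lambda>s. s *\<^sub>R v)) (at 0)"
      by (auto intro!: derivative_eq_intros)
    from has_derivative_compose[OF this, of gf "Hf y"] hess[of y]
    have "((\<lambda>s. gf (y + s *\<^sub>R v)) has_derivative (\<lambda>s. Hf y (s *\<^sub>R v))) (at 0)"
      by (simp add: o_def)
    then show ?thesis
      unfolding \<phi>_def has_field_derivative_def
      by (auto intro!: derivative_eq_intros simp: blinfun.scaleR_right mult.commute)
  qed
  obtain d where "d > 0" and "\<And>h. 0 < h \<Longrightarrow> h < d \<Longrightarrow> \<phi> (0 + h) < \<phi> 0"
    using DERIV_neg_dec_right[OF deriv] \<open>\<not> 0 \<le> Hf y v \<bullet> v\<close> by auto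
  then have "\<phi> (d / 2) < \<phi> 0"
    by simp
  moreover have "0 \<le> (gf (y + (d / 2) *\<^sub>R v) - gf y) \<bullet> ((y + (d / 2) *\<^sub>R v) - y)"
    by (rule convex_on_gradient_monotone[OF convex grad])
  then have "0 \<le> (gf (y + (d / 2) *\<^sub>R v) - gf y) \<bullet> v"
    using \<open>d > 0\<close> by (simp add: zero_le_mult_iff)
  ultimately show False
    by (simp add: \<phi>_def inner_diff_left)
qed

section \<open>Lyapunov functions with an integrable perturbation\<close>

locale perturbed_lyapunov =
  fixes a K :: real and \<Phi> \<Phi>' N D k :: "real \<Rightarrow> real"
  assumes deriv: "\<And>s. s \<ge> a \<Longrightarrow> (\<Phi> has_real_derivative \<Phi>' s) (at s within {a..})"
    and deriv_le: "\<And>s. s \<ge> a \<Longrightarrow> \<Phi>' s \<le> k s * N s - D s"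
    and N_le: "\<And>s. s \<ge> a \<Longrightarrow> N s \<le> 1 + \<Phi> s"
    and \<Phi>_nonneg: "\<And>s. s \<ge> a \<Longrightarrow> 0 \<le> \<Phi> s"
    and D_nonneg: "\<And>s. s \<ge> a \<Longrightarrow> 0 \<le> D s"
    and k_nonneg: "\<And>s. s \<ge> a \<Longrightarrow> 0 \<le> k s"
    and D_cont: "continuous_on {a..} D"
    and k_cont: "continuous_on {a..} k"
    and k_integral_le: "\<And>t. t \<ge> a \<Longrightarrow> integral {a..t} k \<le> K"
begin

lemma bounded: "t \<ge> a \<Longrightarrow> \<Phi> t \<le> (1 + \<Phi> a) * exp K"
proof -
  assume "t \<ge> a"
  have "1 + \<Phi> t \<le> (1 + \<Phi> a) * exp (integral {a..t} k)"
  proof (rule gronwall_atLeast[OF _ _ k_cont \<open>t \<ge> a\<close>])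
    fix s assume "s \<ge> a"
    show "((\<lambda>s. 1 + \<Phi> s) has_real_derivative \<Phi>' s) (at s within {a..})"
      using deriv[OF \<open>s \<ge> a\<close>] by (auto intro!: derivative_eq_intros)
    show "\<Phi>' s \<le> k s * (1 + \<Phi> s)"
      using deriv_le[of s] mult_left_mono[OF N_le[of s] k_nonneg[of s]] D_nonneg[of s] \<open>s \<ge> a\<close>
      by linarith
  qed
  also have "\<dots> \<le> (1 + \<Phi> a) * exp K"
    using k_integral_le[OF \<open>t \<ge> a\<close>] \<Phi>_nonneg[of a] by (intro mult_left_mono) auto
  finally show ?thesis
    by linarith
qed

definition bound :: real where "bound = 1 + (1 + \<Phi> a) * exp K"

lemma deriv_le_bounded: "s \<ge> a \<Longrightarrow> \<Phi>' s \<le> bound * k s - D s"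
  using deriv_le[of s] N_le[of s] bounded[of s] k_nonneg[of s]
    mult_left_mono[of "N s" bound "k s"]
  by (auto simp: bound_def mult.commute)

lemma bound_nonneg: "0 \<le> bound"
  using \<Phi>_nonneg[of a] by (simp add: bound_def)

lemma dissipation_integrable: "D integrable_on {a..}"
proof (rule integrable_on_atLeast_of_bounded_integrals[OF D_cont D_nonneg])
  fix t assume "t \<ge> a"
  have "\<Phi> t - \<Phi> a \<le> bound * integral {a..t} k - integral {a..t} D"
  proof (rule increment_le_integral_of_derivative_le[OF \<open>t \<ge> a\<close>, of "{a..}"])
    show "((\<lambda>s. bound * k s - D s) has_integral
        bound * integral {a..t} k - integral {a..t} D) {a..t}"
      by (intro has_integral_diff has_integral_mult_right integrable_integral
          integrable_on_Icc_of_continuous_on_atLeast[OF k_cont]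
          integrable_on_Icc_of_continuous_on_atLeast[OF D_cont] order.refl)
  qed (use deriv deriv_le_bounded in auto)
  then show "integral {a..t} D \<le> \<Phi> a + bound * K"
    using mult_left_mono[OF k_integral_le[OF \<open>t \<ge> a\<close>] bound_nonneg] \<Phi>_nonneg[OF \<open>t \<ge> a\<close>]
    by linarith
qed

lemma convergent: "\<exists>L. (\<Phi> \<longlongrightarrow> L) at_top"
proof (rule convergent_of_derivative_le_integrable[OF deriv _ _ _ _ \<Phi>_nonneg])
  show "\<Phi>' s \<le> bound * k s" if "s \<ge> a" for s
    using deriv_le_bounded[OF that] D_nonneg[OF that] by linarith
  show "0 \<le> bound * k s" if "s \<ge> a" for s
    using bound_nonneg k_nonneg[OF that] by simp
  show "integral {a..t} (\<lambda>s. bound * k s) \<le> bound * K" if "t \<ge> a" for t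
    using mult_left_mono[OF k_integral_le[OF that] bound_nonneg] by simp
qed (auto intro!: continuous_intros k_cont)

end

section \<open>Inertial dynamics with Hessian-driven damping\<close>

locale inertial_hessian_damping =
  fixes f :: "'a::{real_inner,complete_space} \<Rightarrow> real"
    and gf :: "'a \<Rightarrow> 'a" and Hf :: "'a \<Rightarrow> ('a \<Rightarrow>\<^sub>L 'a)"
    and e e' x x' x'' :: "real \<Rightarrow> 'a"
    and t0 \<alpha> \<beta> :: real
  assumes t0_pos: "t0 > 0" and \<alpha>_pos: "\<alpha> > 0" and \<beta>_pos: "\<beta> > 0"
    and f_grad: "\<And>y. (f has_derivative (\<lambda>h. gf y \<bullet> h)) (at y)"
    and f_hess: "\<And>y. (gf has_derivative blinfun_apply (Hf y)) (at y)"
    and f_convex: "convex_on UNIV f"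
    and f_bdd: "bdd_below (range f)"
    and e_deriv: "\<And>t. t \<ge> t0 \<Longrightarrow> (e has_vector_derivative e' t) (at t within {t0..})"
    and e'_cont: "continuous_on {t0..} e'"
    and e_int: "(\<lambda>t. norm (e t)) integrable_on {t0..}"
    and e'_int: "(\<lambda>t. norm (e' t)) integrable_on {t0..}"
    and x_deriv: "\<And>t. t \<ge> t0 \<Longrightarrow> (x has_vector_derivative x' t) (at t within {t0..})"
    and x'_deriv: "\<And>t. t \<ge> t0 \<Longrightarrow> (x' has_vector_derivative x'' t) (at t within {t0..})"
    and ode: "\<And>t. t \<ge> t0 \<Longrightarrow>
        x'' t + (\<alpha> / t) *\<^sub>R x' t
        + \<beta> *\<^sub>R vector_derivative (\<lambda>s. gf (x s) + e s) (at t within {t0..})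
        + gf (x t) + e t = 0"
begin

definition grad :: "real \<Rightarrow> 'a" where "grad t = gf (x t)"

definition err :: "real \<Rightarrow> 'a" where "err t = e t + \<beta> *\<^sub>R e' t"

definition u' :: "real \<Rightarrow> 'a" where "u' t = x' t + \<beta> *\<^sub>R grad t"

definition inf_f :: real where "inf_f = (INF y. f y)"

definition energy :: "real \<Rightarrow> real" where "energy t = (norm (x' t))\<^sup>2 / 2 + f (x t)"

definition err_L1 :: real
  where "err_L1 = integral {t0..} (\<lambda>t. norm (e t)) + \<beta> * integral {t0..} (\<lambda>t. norm (e' t))"

lemma inf_f_le: "inf_f \<le> f y"
  unfolding inf_f_def using f_bdd by (simp add: cINF_lower)

lemma inf_f_le_energy: "inf_f \<le> energy t"
  using inf_f_le[of "x t"] by (simp add: energy_def add_increasing)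

lemma grad_has_vector_derivative:
  assumes "t \<ge> t0"
  shows "(grad has_vector_derivative Hf (x t) (x' t)) (at t within {t0..})"
proof -
  from has_derivative_compose[OF x_deriv[OF assms, unfolded has_vector_derivative_def] f_hess]
  show ?thesis
    unfolding has_vector_derivative_def grad_def by (simp add: o_def blinfun.scaleR_right)
qed

lemma continuous_on_x': "continuous_on {t0..} x'"
  using x'_deriv by (rule continuous_on_atLeast_of_has_vector_derivative)

lemma continuous_on_grad: "continuous_on {t0..} grad"
  using grad_has_vector_derivative by (rule continuous_on_atLeast_of_has_vector_derivative)

lemma continuous_on_err: "continuous_on {t0..} err"
  unfolding err_def using continuous_on_atLeast_of_has_vector_derivative[OF e_deriv] e'_cont
  by (intro continuous_intros)

lemma continuous_on_u': "continuous_on {t0..} u'"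
  unfolding u'_def using continuous_on_x' continuous_on_grad by (intro continuous_intros)

lemma x''_eq:
  assumes "t \<ge> t0"
  shows "x'' t = - (\<alpha> / t) *\<^sub>R x' t - \<beta> *\<^sub>R Hf (x t) (x' t) - err t - grad t"
proof -
  have "at t within {t0..} \<noteq> bot"
    using assms by (rule at_within_atLeast_neq_bot)
  moreover have "((\<lambda>s. gf (x s) + e s) has_vector_derivative Hf (x t) (x' t) + e' t)
      (at t within {t0..})"
    using grad_has_vector_derivative[OF assms] e_deriv[OF assms] unfolding grad_def
    by (intro has_vector_derivative_add)
  ultimately have "vector_derivative (\<lambda>s. gf (x s) + e s) (at t within {t0..})
      = Hf (x t) (x' t) + e' t"
    by (rule vector_derivative_within)
  with ode[OF assms] show ?thesis
    unfolding err_def grad_def by (simp add: algebra_simps eq_neg_iff_add_eq_0)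
qed

lemma u_has_vector_derivative:
  assumes "t \<ge> t0"
  shows "((\<lambda>t. x t + \<beta> *\<^sub>R integral {t0..t} grad) has_vector_derivative u' t) (at t within {t0..})"
proof -
  have "((\<lambda>s. integral {t0..s} grad) has_vector_derivative grad t) (at t within {t0..t + 1})"
    using assms continuous_on_grad
    by (intro integral_has_vector_derivative_complete) (auto elim: continuous_on_subset)
  moreover have "at t within {t0..t + 1} = at t within {t0..}"
    by (rule at_within_nhd[where S = "{t - 1<..<t + 1}"]) auto
  ultimately show ?thesis
    unfolding u'_def using x_deriv[OF assms]
    by (auto intro!: has_vector_derivative_add
        bounded_linear.has_vector_derivative[OF bounded_linear_scaleR_right])
qed

lemma u'_has_vector_derivative:
  assumes "t \<ge> t0"
  shows "(u' has_vector_derivative - (\<alpha> / t) *\<^sub>R x' t - err t - grad t) (at t within {t0..})"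
  using has_vector_derivative_add[OF x'_deriv[OF assms]
      bounded_linear.has_vector_derivative[OF bounded_linear_scaleR_right
        grad_has_vector_derivative[OF assms], of \<beta>]]
  unfolding u'_def by (simp add: x''_eq[OF assms])

lemma f_x_has_derivative:
  assumes "t \<ge> t0"
  shows "((\<lambda>s. f (x s)) has_real_derivative grad t \<bullet> x' t) (at t within {t0..})"
proof -
  from has_derivative_compose[OF x_deriv[OF assms, unfolded has_vector_derivative_def] f_grad]
  show ?thesis
    unfolding grad_def by (rule has_derivative_imp_has_field_derivative) (simp add: o_def)
qed

lemma err_integral_le:
  assumes "t0 \<le> a" and "a \<le> b"
  shows "integral {a..b} (\<lambda>t. norm (err t)) \<le> err_L1"
proof -
  have int_e: "(\<lambda>t. norm (e t)) integrable_on {a..b}"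
    and int_e': "(\<lambda>t. norm (e' t)) integrable_on {a..b}"
    using assms
    by (auto intro!: integrable_on_subinterval[OF e_int] integrable_on_subinterval[OF e'_int])
  have "integral {a..b} (\<lambda>t. norm (err t))
      \<le> integral {a..b} (\<lambda>t. norm (e t)) + \<beta> * integral {a..b} (\<lambda>t. norm (e' t))"
  proof (rule has_integral_le[OF integrable_integral])
    show "(\<lambda>t. norm (err t)) integrable_on {a..b}"
      using assms continuous_on_err
      by (intro integrable_on_Icc_of_continuous_on_atLeast continuous_on_norm)
    show "((\<lambda>t. norm (e t) + \<beta> * norm (e' t)) has_integral
        integral {a..b} (\<lambda>t. norm (e t)) + \<beta> * integral {a..b} (\<lambda>t. norm (e' t))) {a..b}"
      by (intro has_integral_add has_integral_mult_right integrable_integral int_e int_e')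
    show "norm (err t) \<le> norm (e t) + \<beta> * norm (e' t)" for t
      unfolding err_def using norm_triangle_ineq[of "e t" "\<beta> *\<^sub>R e' t"] \<beta>_pos by simp
  qed
  also have "\<dots> \<le> err_L1"
    unfolding err_L1_def using assms \<beta>_pos int_e int_e' e_int e'_int
    by (intro add_mono mult_left_mono integral_subset_le) auto
  finally show ?thesis .
qed

lemma energy_has_derivative:
  assumes "t \<ge> t0"
  shows "(energy has_real_derivative
      - (\<alpha> / t) * (norm (x' t))\<^sup>2 - \<beta> * (Hf (x t) (x' t) \<bullet> x' t) - err t \<bullet> x' t)
      (at t within {t0..})"
proof -
  have "(energy has_real_derivative x' t \<bullet> x'' t + grad t \<bullet> x' t) (at t within {t0..})"
    using has_real_derivative_inner[OF x'_deriv[OF assms] x'_deriv[OF assms]]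
      f_x_has_derivative[OF assms]
    unfolding energy_def power2_norm_eq_inner
    by (auto intro!: derivative_eq_intros simp: inner_commute)
  then show ?thesis
    by (simp add: x''_eq[OF assms] inner_diff_right inner_commute power2_norm_eq_inner)
qed

sublocale energy_estimate: perturbed_lyapunov t0 err_L1 "\<lambda>t. energy t - inf_f"
  "\<lambda>t. - (\<alpha> / t) * (norm (x' t))\<^sup>2 - \<beta> * (Hf (x t) (x' t) \<bullet> x' t) - err t \<bullet> x' t"
  "\<lambda>t. norm (x' t)" "\<lambda>t. \<alpha> * ((1 / t) * (norm (x' t))\<^sup>2)" "\<lambda>t. norm (err t)"
proof
  fix s assume "t0 \<le> s"
  show "((\<lambda>t. energy t - inf_f) has_real_derivative
      - (\<alpha> / s) * (norm (x' s))\<^sup>2 - \<beta> * (Hf (x s) (x' s) \<bullet> x' s) - err s \<bullet> x' s)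
      (at s within {t0..})"
    using energy_has_derivative[OF \<open>t0 \<le> s\<close>] by (auto intro!: derivative_eq_intros)
  have "0 \<le> \<beta> * (Hf (x s) (x' s) \<bullet> x' s)"
    using convex_on_hessian_nonneg[OF f_convex f_grad f_hess] \<beta>_pos by simp
  moreover have "- (err s \<bullet> x' s) \<le> norm (err s) * norm (x' s)"
    using norm_cauchy_schwarz[of "- err s" "x' s"] by simp
  ultimately show "- (\<alpha> / s) * (norm (x' s))\<^sup>2 - \<beta> * (Hf (x s) (x' s) \<bullet> x' s) - err s \<bullet> x' s
      \<le> norm (err s) * norm (x' s) - \<alpha> * ((1 / s) * (norm (x' s))\<^sup>2)"
    by simp
  show "norm (x' s) \<le> 1 + (energy s - inf_f)"
    using le_half_plus_square_div[of 1 "norm (x' s)"] inf_f_le[of "x s"] by (simp add: energy_def)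
  show "0 \<le> energy s - inf_f"
    using inf_f_le_energy by simp
  show "0 \<le> \<alpha> * ((1 / s) * (norm (x' s))\<^sup>2)"
    using \<alpha>_pos t0_pos \<open>t0 \<le> s\<close> by simp
  show "0 \<le> norm (err s)"
    by simp
next
  show "continuous_on {t0..} (\<lambda>t. \<alpha> * ((1 / t) * (norm (x' t))\<^sup>2))"
    using t0_pos by (intro continuous_intros continuous_on_x') auto
  show "continuous_on {t0..} (\<lambda>t. norm (err t))"
    by (intro continuous_intros continuous_on_err)
  show "integral {t0..t} (\<lambda>t. norm (err t)) \<le> err_L1" if "t0 \<le> t" for t
    using that by (intro err_integral_le) auto
qed

definition gap_bound :: real where "gap_bound = (1 + (energy t0 - inf_f)) * exp err_L1"

lemma gap_bound_nonneg: "0 \<le> gap_bound"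
  unfolding gap_bound_def using inf_f_le_energy[of t0] by simp

lemma f_gap_le:
  assumes "t \<ge> t0"
  shows "f (x t) - inf_f \<le> gap_bound"
  using energy_estimate.bounded[OF assms] zero_le_power2[of "norm (x' t)"]
  unfolding energy_def gap_bound_def by linarith

definition t1 :: real where "t1 = t0 + 2 * \<alpha> * \<beta>"

lemma t1_ge: "t0 \<le> t1"
  unfolding t1_def using \<alpha>_pos \<beta>_pos by simp

lemma damping_ratio_le:
  assumes "t \<ge> t1"
  shows "\<alpha> * \<beta> / t \<le> 1 / 2"
proof -
  have "t > 0" and "2 * \<alpha> * \<beta> \<le> t"
    using assms t0_pos mult_pos_pos[OF \<alpha>_pos \<beta>_pos] by (auto simp: t1_def)
  then show ?thesis
    by (simp add: field_simps)
qed

(* The weight 1 - alpha beta / t cancels the cross term between grad and u' in the derivative,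
   and the last term absorbs the contribution alpha beta (f (x t) - inf_f) / t^2 of the weight. *)
definition lyapunov :: "real \<Rightarrow> real"
  where "lyapunov t = (norm (u' t))\<^sup>2 / 2 + (1 - \<alpha> * \<beta> / t) * (f (x t) - inf_f)
    + \<alpha> * \<beta> * gap_bound / t"

lemma lyapunov_has_derivative:
  assumes "t \<ge> t0"
  shows "(lyapunov has_real_derivative
      - (\<alpha> / t) * (norm (u' t))\<^sup>2 - err t \<bullet> u' t - \<beta> * (1 - \<alpha> * \<beta> / t) * (norm (grad t))\<^sup>2
      + \<alpha> * \<beta> / t\<^sup>2 * (f (x t) - inf_f - gap_bound)) (at t within {t0..})"
proof -
  have "t \<noteq> 0"
    using assms t0_pos by simp
  have "(lyapunov has_real_derivative
      u' t \<bullet> (- (\<alpha> / t) *\<^sub>R x' t - err t - grad t) + \<alpha> * \<beta> / t\<^sup>2 * (f (x t) - inf_f)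
      + (1 - \<alpha> * \<beta> / t) * (grad t \<bullet> x' t) - \<alpha> * \<beta> * gap_bound / t\<^sup>2) (at t within {t0..})"
    using has_real_derivative_inner[OF u'_has_vector_derivative[OF assms]
        u'_has_vector_derivative[OF assms]]
      f_x_has_derivative[OF assms] \<open>t \<noteq> 0\<close>
    unfolding lyapunov_def power2_norm_eq_inner
    by (auto intro!: derivative_eq_intros simp: inner_commute power2_eq_square field_simps)
  moreover have "x' t = u' t - \<beta> *\<^sub>R grad t"
    by (simp add: u'_def)
  ultimately show ?thesis
    by (simp add: inner_diff_right inner_commute power2_norm_eq_inner algebra_simps
        diff_divide_distrib add_divide_distrib)
qed

lemma lyapunov_ge:
  assumes "t \<ge> t1"
  shows "(norm (u' t))\<^sup>2 / 2 \<le> lyapunov t"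
proof -
  have "t > 0"
    using assms t1_ge t0_pos by simp
  then have "0 \<le> (1 - \<alpha> * \<beta> / t) * (f (x t) - inf_f)" and "0 \<le> \<alpha> * \<beta> * gap_bound / t"
    using damping_ratio_le[OF assms] inf_f_le[of "x t"] \<alpha>_pos \<beta>_pos gap_bound_nonneg by simp_all
  then show ?thesis
    unfolding lyapunov_def by linarith
qed

sublocale lyapunov_estimate: perturbed_lyapunov t1 err_L1 lyapunov
  "\<lambda>t. - (\<alpha> / t) * (norm (u' t))\<^sup>2 - err t \<bullet> u' t - \<beta> * (1 - \<alpha> * \<beta> / t) * (norm (grad t))\<^sup>2
      + \<alpha> * \<beta> / t\<^sup>2 * (f (x t) - inf_f - gap_bound)"
  "\<lambda>t. norm (u' t)" "\<lambda>t. \<alpha> * ((1 / t) * (norm (u' t))\<^sup>2) + \<beta> / 2 * (norm (grad t))\<^sup>2"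
  "\<lambda>t. norm (err t)"
proof
  fix s assume "t1 \<le> s"
  then have "t0 \<le> s" and "s > 0"
    using t1_ge t0_pos by auto
  show "(lyapunov has_real_derivative - (\<alpha> / s) * (norm (u' s))\<^sup>2 - err s \<bullet> u' s
      - \<beta> * (1 - \<alpha> * \<beta> / s) * (norm (grad s))\<^sup>2 + \<alpha> * \<beta> / s\<^sup>2 * (f (x s) - inf_f - gap_bound))
      (at s within {t1..})"
    using lyapunov_has_derivative[OF \<open>t0 \<le> s\<close>] t1_ge by (auto intro: DERIV_subset)
  have "- (err s \<bullet> u' s) \<le> norm (err s) * norm (u' s)"
    using norm_cauchy_schwarz[of "- err s" "u' s"] by simp
  moreover have "\<beta> / 2 * (norm (grad s))\<^sup>2 \<le> \<beta> * (1 - \<alpha> * \<beta> / s) * (norm (grad s))\<^sup>2"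
    using damping_ratio_le[OF \<open>t1 \<le> s\<close>] \<beta>_pos by (intro mult_right_mono) auto
  moreover have "\<alpha> * \<beta> / s\<^sup>2 * (f (x s) - inf_f - gap_bound) \<le> 0"
    using f_gap_le[OF \<open>t0 \<le> s\<close>] \<alpha>_pos \<beta>_pos by (intro mult_nonneg_nonpos) auto
  ultimately show "- (\<alpha> / s) * (norm (u' s))\<^sup>2 - err s \<bullet> u' s
      - \<beta> * (1 - \<alpha> * \<beta> / s) * (norm (grad s))\<^sup>2 + \<alpha> * \<beta> / s\<^sup>2 * (f (x s) - inf_f - gap_bound)
      \<le> norm (err s) * norm (u' s) - (\<alpha> * ((1 / s) * (norm (u' s))\<^sup>2) + \<beta> / 2 * (norm (grad s))\<^sup>2)"
    by simp
  show "norm (u' s) \<le> 1 + lyapunov s"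
    using le_half_plus_square_div[of 1 "norm (u' s)"] lyapunov_ge[OF \<open>t1 \<le> s\<close>] by linarith
  show "0 \<le> lyapunov s"
    using lyapunov_ge[OF \<open>t1 \<le> s\<close>] zero_le_power2[of "norm (u' s)"] by linarith
  show "0 \<le> \<alpha> * ((1 / s) * (norm (u' s))\<^sup>2) + \<beta> / 2 * (norm (grad s))\<^sup>2"
    using \<alpha>_pos \<beta>_pos \<open>s > 0\<close> by simp
  show "0 \<le> norm (err s)"
    by simp
next
  have "{t1..} \<subseteq> {t0..}" and "0 \<notin> {t1..}"
    using t1_ge t0_pos by auto
  then show "continuous_on {t1..} (\<lambda>t. \<alpha> * ((1 / t) * (norm (u' t))\<^sup>2) + \<beta> / 2 * (norm (grad t))\<^sup>2)"
    and "continuous_on {t1..} (\<lambda>t. norm (err t))"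
    by (auto intro!: continuous_intros intro: continuous_on_subset[OF continuous_on_u']
        continuous_on_subset[OF continuous_on_grad] continuous_on_subset[OF continuous_on_err])
  show "integral {t1..t} (\<lambda>t. norm (err t)) \<le> err_L1" if "t1 \<le> t" for t
    using that t1_ge by (intro err_integral_le) auto
qed

lemma u'_bounded:
  obtains B where "\<And>t. t \<ge> t0 \<Longrightarrow> norm (u' t) \<le> B"
proof -
  have "compact (u' ` {t0..t1})"
    by (intro compact_continuous_image continuous_on_subset[OF continuous_on_u']) auto
  then obtain B0 where B0: "\<And>t. t \<in> {t0..t1} \<Longrightarrow> norm (u' t) \<le> B0"
    by (meson bounded_iff compact_imp_bounded imageI)
  have "norm (u' t) \<le> max B0 (1 + (1 + lyapunov t1) * exp err_L1)" if "t \<ge> t0" for t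
  proof (cases "t \<le> t1")
    case True
    then show ?thesis
      using B0[of t] that by (simp add: le_max_iff_disj)
  next
    case False
    then show ?thesis
      using lyapunov_estimate.N_le[of t] lyapunov_estimate.bounded[of t] by auto
  qed
  then show thesis
    by (rule that)
qed

lemma x'_inverse_weighted_integrable: "(\<lambda>t. (1 / t) * (norm (x' t))\<^sup>2) integrable_on {t0..}"
  by (rule integrable_on_cmult_iff[THEN iffD1, OF _ energy_estimate.dissipation_integrable])
    (use \<alpha>_pos in simp)

lemma integrable_of_lyapunov_dissipation:
  assumes cont: "continuous_on {t0..} h" and nonneg: "\<And>t. t \<ge> t0 \<Longrightarrow> 0 \<le> h t"
    and le: "\<And>t. t \<ge> t1 \<Longrightarrow> h t \<le> \<alpha> * ((1 / t) * (norm (u' t))\<^sup>2) + \<beta> / 2 * (norm (grad t))\<^sup>2"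
  shows "h integrable_on {t0..}"
proof (rule integrable_on_atLeast_extend[OF cont t1_ge])
  have "continuous_on {t1..} h"
    using t1_ge by (auto intro: continuous_on_subset[OF cont])
  then show "h integrable_on {t1..}"
    using t1_ge nonneg le
    by (intro integrable_on_atLeast_of_le_integrable[OF _ _ _
          lyapunov_estimate.dissipation_integrable])
      auto
qed

lemma u'_inverse_weighted_integrable: "(\<lambda>t. (1 / t) * (norm (u' t))\<^sup>2) integrable_on {t0..}"
proof -
  have "(\<lambda>t. \<alpha> * ((1 / t) * (norm (u' t))\<^sup>2)) integrable_on {t0..}"
    using t0_pos \<alpha>_pos \<beta>_pos t1_ge
    by (intro integrable_of_lyapunov_dissipation) (auto intro!: continuous_intros continuous_on_u')
  then show ?thesis
    by (rule integrable_on_cmult_iff[THEN iffD1, rotated]) (use \<alpha>_pos in simp)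
qed

lemma grad_square_integrable: "(\<lambda>t. (norm (grad t))\<^sup>2) integrable_on {t0..}"
proof -
  have "(\<lambda>t. \<beta> / 2 * (norm (grad t))\<^sup>2) integrable_on {t0..}"
    using t0_pos \<alpha>_pos \<beta>_pos t1_ge
    by (intro integrable_of_lyapunov_dissipation)
      (auto intro!: continuous_intros continuous_on_grad)
  then show ?thesis
    by (rule integrable_on_cmult_iff[THEN iffD1, rotated]) (use \<beta>_pos in simp)
qed

lemma err_L1_nonneg: "0 \<le> err_L1"
  using err_integral_le[of t0 t0] by simp

definition anchor :: "'a \<Rightarrow> real \<Rightarrow> real"
  where "anchor z t = u' t \<bullet> (x t - z) + \<alpha> / 2 * ((norm (x t - z))\<^sup>2 / t)"

lemma anchor_has_derivative:
  assumes "t \<ge> t0"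
  shows "(anchor z has_real_derivative
      u' t \<bullet> x' t - (err t + grad t) \<bullet> (x t - z) - \<alpha> / 2 * ((norm (x t - z))\<^sup>2 / t\<^sup>2))
      (at t within {t0..})"
proof -
  define p where "p s = x s - z" for s
  have "t \<noteq> 0"
    using assms t0_pos by simp
  have dp: "(p has_vector_derivative x' t) (at t within {t0..})"
    unfolding p_def using x_deriv[OF assms] by (auto intro!: derivative_eq_intros)
  have "anchor z = (\<lambda>s. u' s \<bullet> p s + \<alpha> / 2 * (p s \<bullet> p s / s))"
    by (auto simp: anchor_def p_def fun_eq_iff power2_norm_eq_inner)
  then have "(anchor z has_real_derivative
      (u' t \<bullet> x' t + (- (\<alpha> / t) *\<^sub>R x' t - err t - grad t) \<bullet> p t)
      + \<alpha> / 2 * (((p t \<bullet> x' t + x' t \<bullet> p t) * t - p t \<bullet> p t * 1) / (t * t))) (at t within {t0..})"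
    by (simp only:) (intro DERIV_add DERIV_cmult DERIV_divide DERIV_ident \<open>t \<noteq> 0\<close>
        has_real_derivative_inner u'_has_vector_derivative assms dp)
  moreover have "(- (\<alpha> / t) *\<^sub>R x' t - err t - grad t) \<bullet> p t
      = - (\<alpha> / t) * (p t \<bullet> x' t) - (err t + grad t) \<bullet> p t"
    by (simp add: inner_diff_left inner_add_left inner_commute[of "x' t"])
  moreover have "(a + (- (\<alpha> / t) * A - c)) + \<alpha> / 2 * (((A + A) * t - N * 1) / (t * t))
      = a - c - \<alpha> / 2 * (N / t\<^sup>2)" for a c A N
    using \<open>t \<noteq> 0\<close> by (simp add: field_simps power2_eq_square)
  ultimately have "(anchor z has_real_derivative
      u' t \<bullet> x' t - (err t + grad t) \<bullet> p t - \<alpha> / 2 * (p t \<bullet> p t / t\<^sup>2)) (at t within {t0..})"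
    by (simp only: inner_commute[of "x' t" "p t"])
  then show ?thesis
    by (simp only: p_def power2_norm_eq_inner)
qed

lemma anchor_derivative_le:
  assumes "t \<ge> t0"
  shows "u' t \<bullet> x' t - (err t + grad t) \<bullet> (x t - z) - \<alpha> / 2 * ((norm (x t - z))\<^sup>2 / t\<^sup>2)
    \<le> 2 * (norm (x' t))\<^sup>2 + \<beta>\<^sup>2 / 2 * (norm (grad t))\<^sup>2 + norm (err t) * norm (x t - z)
      + f z - energy t"
proof -
  have "u' t \<bullet> x' t = (norm (x' t))\<^sup>2 + \<beta> * (grad t \<bullet> x' t)"
    by (simp add: u'_def inner_add_left power2_norm_eq_inner)
  moreover have "\<beta> * (grad t \<bullet> x' t) \<le> \<beta>\<^sup>2 / 2 * (norm (grad t))\<^sup>2 + (norm (x' t))\<^sup>2 / 2"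
  proof -
    have "\<beta> * (grad t \<bullet> x' t) \<le> \<beta> * (norm (grad t) * norm (x' t))"
      using \<beta>_pos norm_cauchy_schwarz[of "grad t" "x' t"] by (intro mult_left_mono) auto
    moreover have "0 \<le> (\<beta> * norm (grad t) - norm (x' t))\<^sup>2"
      by simp
    ultimately show ?thesis
      by (simp add: power2_eq_square algebra_simps)
  qed
  moreover have "- (err t \<bullet> (x t - z)) \<le> norm (err t) * norm (x t - z)"
    using norm_cauchy_schwarz[of "- err t" "x t - z"] by simp
  moreover have "f (x t) - f z \<le> grad t \<bullet> (x t - z)"
    using convex_on_gradient_inequality[OF f_convex f_grad, of "x t" z]
    by (simp add: grad_def inner_diff_right)
  moreover have "0 \<le> \<alpha> / 2 * ((norm (x t - z))\<^sup>2 / t\<^sup>2)"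
    using \<alpha>_pos by simp
  ultimately show ?thesis
    by (simp add: energy_def inner_add_left)
qed

lemma anchor_increment_le:
  assumes "t0 \<le> T" and "T \<le> t"
    and energy_ge: "\<And>r. r \<in> {T..t} \<Longrightarrow> c \<le> energy r"
    and dist_le: "\<And>r. r \<in> {T..t} \<Longrightarrow> norm (x r - z) \<le> P"
  shows "anchor z t - anchor z T \<le> 2 * integral {T..t} (\<lambda>r. (norm (x' r))\<^sup>2)
    + \<beta>\<^sup>2 / 2 * integral {T..t} (\<lambda>r. (norm (grad r))\<^sup>2) + P * integral {T..t} (\<lambda>r. norm (err r))
    - (c - f z) * (t - T)"
proof (rule increment_le_integral_of_derivative_le[OF \<open>T \<le> t\<close>, of "{t0..}"])
  fix r assume r: "r \<in> {T..t}"
  then show "(anchor z has_real_derivative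
      u' r \<bullet> x' r - (err r + grad r) \<bullet> (x r - z) - \<alpha> / 2 * ((norm (x r - z))\<^sup>2 / r\<^sup>2))
      (at r within {t0..})"
    using anchor_has_derivative \<open>t0 \<le> T\<close> by simp
  have "norm (err r) * norm (x r - z) \<le> P * norm (err r)"
    using mult_left_mono[OF dist_le[OF r], of "norm (err r)"] by (simp add: mult.commute)
  then show "u' r \<bullet> x' r - (err r + grad r) \<bullet> (x r - z) - \<alpha> / 2 * ((norm (x r - z))\<^sup>2 / r\<^sup>2)
      \<le> 2 * (norm (x' r))\<^sup>2 + \<beta>\<^sup>2 / 2 * (norm (grad r))\<^sup>2 + P * norm (err r) - (c - f z)"
    using anchor_derivative_le[of r z] energy_ge[OF r] r \<open>t0 \<le> T\<close> by simp
next
  have "(\<lambda>r. (norm (x' r))\<^sup>2) integrable_on {T..t}" "(\<lambda>r. (norm (grad r))\<^sup>2) integrable_on {T..t}"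
    "(\<lambda>r. norm (err r)) integrable_on {T..t}"
    using \<open>t0 \<le> T\<close> continuous_on_x' continuous_on_grad continuous_on_err
    by (auto intro!: integrable_on_Icc_of_continuous_on_atLeast continuous_intros)
  moreover have "((\<lambda>r. c - f z) has_integral (c - f z) * (t - T)) {T..t}"
    using has_integral_const_real[of "c - f z" T t] \<open>T \<le> t\<close> by (simp add: mult.commute)
  ultimately show "((\<lambda>r. 2 * (norm (x' r))\<^sup>2 + \<beta>\<^sup>2 / 2 * (norm (grad r))\<^sup>2
        + P * norm (err r) - (c - f z))
      has_integral 2 * integral {T..t} (\<lambda>r. (norm (x' r))\<^sup>2)
        + \<beta>\<^sup>2 / 2 * integral {T..t} (\<lambda>r. (norm (grad r))\<^sup>2) + P * integral {T..t} (\<lambda>r. norm (err r))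
        - (c - f z) * (t - T)) {T..t}"
    by (intro has_integral_diff has_integral_add has_integral_mult_right integrable_integral)
qed (use \<open>t0 \<le> T\<close> in auto)

lemma dist_le_integral_speed:
  assumes "t0 \<le> T" and "T \<le> r" and "r \<le> t"
  shows "norm (x r - z) \<le> norm (x T - z) + integral {T..t} (\<lambda>s. norm (x' s))"
proof -
  have cont: "continuous_on {t0..} (\<lambda>s. norm (x' s))"
    by (intro continuous_intros continuous_on_x')
  have "norm (x r - z) \<le> norm (x T - z) + integral {T..r} (\<lambda>s. norm (x' s))"
  proof (rule norm_le_integral_norm_derivative[OF \<open>T \<le> r\<close>])
    fix s assume "s \<in> {T..r}"
    then have "((\<lambda>s. x s - z) has_vector_derivative x' s) (at s within {t0..})"
      using x_deriv \<open>t0 \<le> T\<close> by (auto intro!: derivative_eq_intros)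
    then show "((\<lambda>s. x s - z) has_vector_derivative x' s) (at s within {T..r})"
      by (rule has_vector_derivative_within_subset) (use \<open>t0 \<le> T\<close> in auto)
  qed (use \<open>t0 \<le> T\<close> in \<open>auto intro!: integrable_on_Icc_of_continuous_on_atLeast[OF cont]\<close>)
  also have "\<dots> \<le> norm (x T - z) + integral {T..t} (\<lambda>s. norm (x' s))"
    using \<open>r \<le> t\<close> \<open>t0 \<le> T\<close>
    by (intro add_left_mono integral_subset_le integrable_on_Icc_of_continuous_on_atLeast[OF cont])
      auto
  finally show ?thesis .
qed

lemma anchor_ge:
  assumes "t \<ge> t0" and "norm (u' t) \<le> B" and "norm (x t - z) \<le> P"
  shows "- (B * P) \<le> anchor z t"
proof -
  have "norm (u' t) * norm (x t - z) \<le> B * P"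
    using assms by (intro mult_mono) (auto intro: order_trans[OF norm_ge_zero])
  moreover have "- (norm (u' t) * norm (x t - z)) \<le> u' t \<bullet> (x t - z)"
    using norm_cauchy_schwarz[of "- u' t" "x t - z"] by simp
  moreover have "0 \<le> \<alpha> / 2 * ((norm (x t - z))\<^sup>2 / t)"
    using \<alpha>_pos assms(1) t0_pos by simp
  ultimately show ?thesis
    unfolding anchor_def by linarith
qed

lemma energy_gap_linear_bound:
  assumes "t0 \<le> T" and "T \<le> t"
    and "\<And>r. r \<ge> T \<Longrightarrow> f z + \<kappa> \<le> energy r"
    and u'_le: "\<And>r. r \<ge> t0 \<Longrightarrow> norm (u' r) \<le> B"
  shows "\<kappa> * (t - T) \<le> anchor z T + \<beta>\<^sup>2 / 2 * integral {t0..} (\<lambda>r. (norm (grad r))\<^sup>2)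
    + (B + err_L1) * (norm (x T - z) + integral {T..t} (\<lambda>r. norm (x' r)))
    + 2 * integral {T..t} (\<lambda>r. (norm (x' r))\<^sup>2)"
proof -
  define P where "P = norm (x T - z) + integral {T..t} (\<lambda>r. norm (x' r))"
  have "0 \<le> P"
    using assms continuous_on_x' unfolding P_def
    by (intro add_nonneg_nonneg norm_ge_zero integral_nonneg
        integrable_on_Icc_of_continuous_on_atLeast continuous_intros) auto
  have "anchor z t - anchor z T \<le> 2 * integral {T..t} (\<lambda>r. (norm (x' r))\<^sup>2)
      + \<beta>\<^sup>2 / 2 * integral {T..t} (\<lambda>r. (norm (grad r))\<^sup>2) + P * integral {T..t} (\<lambda>r. norm (err r))
      - \<kappa> * (t - T)"
    using anchor_increment_le[of T t "f z + \<kappa>" z P] assms dist_le_integral_speed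
    unfolding P_def by auto
  moreover have "\<beta>\<^sup>2 / 2 * integral {T..t} (\<lambda>r. (norm (grad r))\<^sup>2)
      \<le> \<beta>\<^sup>2 / 2 * integral {t0..} (\<lambda>r. (norm (grad r))\<^sup>2)"
    using assms continuous_on_grad
    by (intro mult_left_mono integral_subset_le grad_square_integrable
        integrable_on_Icc_of_continuous_on_atLeast continuous_intros) auto
  moreover have "P * integral {T..t} (\<lambda>r. norm (err r)) \<le> P * err_L1"
    using assms \<open>0 \<le> P\<close> by (intro mult_left_mono err_integral_le) auto
  moreover have "- (B * P) \<le> anchor z t"
    using assms u'_le[of t] dist_le_integral_speed[of T t t z] unfolding P_def
    by (intro anchor_ge) auto
  ultimately have "\<kappa> * (t - T) \<le> anchor z T + \<beta>\<^sup>2 / 2 * integral {t0..} (\<lambda>r. (norm (grad r))\<^sup>2)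
      + B * P + P * err_L1 + 2 * integral {T..t} (\<lambda>r. (norm (x' r))\<^sup>2)"
    by linarith
  then show ?thesis
    unfolding P_def by (simp add: algebra_simps)
qed

lemma energy_gap_sublinear:
  assumes energy_ge: "\<And>r. r \<ge> TE \<Longrightarrow> f z + \<kappa> \<le> energy r" and "\<epsilon> > 0"
  obtains T C where "T > 0" and "\<And>t. t \<ge> T \<Longrightarrow> \<kappa> * (t - T) \<le> C + \<epsilon> * t"
proof -
  obtain B where u'_le: "\<And>r. r \<ge> t0 \<Longrightarrow> norm (u' r) \<le> B"
    using u'_bounded by blast
  have "0 \<le> B + err_L1"
    using u'_le[of t0] err_L1_nonneg norm_ge_zero[of "u' t0"] by linarith
  define W where "W = B + err_L1 + 2"
  have "W > 0"
    using \<open>0 \<le> B + err_L1\<close> by (simp add: W_def)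
  obtain T where "T \<ge> max t0 TE"
    and square: "\<And>t. t \<ge> T \<Longrightarrow> integral {T..t} (\<lambda>s. (norm (x' s))\<^sup>2) \<le> \<epsilon> / W * t"
    and speed: "\<And>t. t \<ge> T \<Longrightarrow> integral {T..t} (\<lambda>s. norm (x' s)) \<le> \<epsilon> / W * t"
    using integrals_sublinear_of_inverse_weighted_square_integrable[of t0 "\<lambda>t. norm (x' t)"
        "\<epsilon> / W" "max t0 TE"]
      t0_pos \<open>\<epsilon> > 0\<close> \<open>W > 0\<close> continuous_on_x' x'_inverse_weighted_integrable
    by (auto intro: continuous_intros)
  then have "t0 \<le> T" and "T > 0" and energy_ge': "\<And>r. r \<ge> T \<Longrightarrow> f z + \<kappa> \<le> energy r"
    using t0_pos energy_ge by auto
  define C where "C = anchor z T + \<beta>\<^sup>2 / 2 * integral {t0..} (\<lambda>r. (norm (grad r))\<^sup>2)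
    + (B + err_L1) * norm (x T - z)"
  show thesis
  proof (rule that[OF \<open>T > 0\<close>])
    fix t assume "t \<ge> T"
    have "\<kappa> * (t - T) \<le> C + (B + err_L1) * integral {T..t} (\<lambda>s. norm (x' s))
        + 2 * integral {T..t} (\<lambda>s. (norm (x' s))\<^sup>2)"
      using energy_gap_linear_bound[OF \<open>t0 \<le> T\<close> \<open>t \<ge> T\<close> energy_ge' u'_le]
      unfolding C_def distrib_left by linarith
    also have "\<dots> \<le> C + (B + err_L1) * (\<epsilon> / W * t) + 2 * (\<epsilon> / W * t)"
      using mult_left_mono[OF speed[OF \<open>t \<ge> T\<close>] \<open>0 \<le> B + err_L1\<close>] square[OF \<open>t \<ge> T\<close>]
      by linarith
    also have "\<dots> = C + (B + err_L1 + 2) * (\<epsilon> / W * t)"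
      by (simp add: algebra_simps)
    also have "\<dots> = C + \<epsilon> * t"
      using \<open>W > 0\<close> by (simp add: W_def[symmetric])
    finally show "\<kappa> * (t - T) \<le> C + \<epsilon> * t" .
  qed
qed

lemma energy_limit_le:
  assumes lim: "(energy \<longlongrightarrow> L) at_top"
  shows "L \<le> f z"
proof (rule ccontr)
  assume "\<not> L \<le> f z"
  define \<kappa> where "\<kappa> = (L - f z) / 2"
  have "\<kappa> > 0" and "f z + \<kappa> < L"
    using \<open>\<not> L \<le> f z\<close> by (simp_all add: \<kappa>_def field_simps)
  from order_tendstoD(1)[OF lim this(2)]
  obtain TE where "\<And>r. r \<ge> TE \<Longrightarrow> f z + \<kappa> \<le> energy r"
    by (auto simp: eventually_at_top_linorder intro: less_imp_le)
  then obtain T C where "T > 0" and linear: "\<And>t. t \<ge> T \<Longrightarrow> \<kappa> * (t - T) \<le> C + \<kappa> / 2 * t"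
    using energy_gap_sublinear \<open>\<kappa> > 0\<close> by (metis half_gt_zero)
  define t where "t = 2 * T + 2 * (\<bar>C\<bar> + 1) / \<kappa>"
  have "t \<ge> T" and "\<kappa> * t = 2 * (\<kappa> * T) + 2 * \<bar>C\<bar> + 2"
    using \<open>T > 0\<close> \<open>\<kappa> > 0\<close> by (auto simp: t_def field_simps)
  moreover have "\<kappa> * t - \<kappa> * T \<le> C + \<kappa> * t / 2"
    using linear[OF \<open>t \<ge> T\<close>] by (simp add: right_diff_distrib)
  ultimately show False
    using abs_ge_self[of C] by linarith
qed

lemma energy_tendsto_inf: "(energy \<longlongrightarrow> inf_f) at_top"
proof -
  obtain L where "((\<lambda>t. energy t - inf_f) \<longlongrightarrow> L) at_top"
    using energy_estimate.convergent by blast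
  from tendsto_add[OF this tendsto_const[of inf_f]]
  have lim: "(energy \<longlongrightarrow> L + inf_f) at_top"
    by simp
  have "L + inf_f \<le> (INF y. f y)"
    using energy_limit_le[OF lim] by (intro cINF_greatest) auto
  then have "L + inf_f \<le> inf_f"
    unfolding inf_f_def[symmetric] .
  moreover have "inf_f \<le> L + inf_f"
    using inf_f_le_energy by (intro tendsto_lowerbound[OF lim]) simp_all
  ultimately show ?thesis
    using lim by simp
qed

lemma f_x_tendsto_inf: "((\<lambda>t. f (x t)) \<longlongrightarrow> inf_f) at_top"
  by (rule tendsto_sandwich[OF _ _ tendsto_const energy_tendsto_inf])
    (auto simp: inf_f_le energy_def)

lemma x'_tendsto_0: "((\<lambda>t. norm (x' t)) \<longlongrightarrow> 0) at_top"
proof (rule tendsto_norm_zero_of_square)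
  have "((\<lambda>t. 2 * (energy t - f (x t))) \<longlongrightarrow> 2 * (inf_f - inf_f)) at_top"
    by (intro tendsto_intros energy_tendsto_inf f_x_tendsto_inf)
  then show "((\<lambda>t. (norm (x' t))\<^sup>2) \<longlongrightarrow> 0) at_top"
    by (simp add: energy_def)
qed

lemma u'_tendsto_0: "((\<lambda>t. norm (u' t)) \<longlongrightarrow> 0) at_top"
proof (rule tendsto_norm_zero_of_square)
  obtain L where "(lyapunov \<longlongrightarrow> L) at_top"
    using lyapunov_estimate.convergent by blast
  moreover have "((\<lambda>t. c / t) \<longlongrightarrow> 0) at_top" for c :: real
    by (intro tendsto_divide_0[OF tendsto_const] filterlim_at_top_imp_at_infinity filterlim_ident)
  ultimately have "((\<lambda>t. 2 * (lyapunov t - (1 - \<alpha> * \<beta> / t) * (f (x t) - inf_f)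
        - \<alpha> * \<beta> * gap_bound / t))
      \<longlongrightarrow> 2 * (L - (1 - 0) * (inf_f - inf_f) - 0)) at_top"
    by (intro tendsto_intros f_x_tendsto_inf) auto
  then have lim: "((\<lambda>t. (norm (u' t))\<^sup>2) \<longlongrightarrow> 2 * L) at_top"
    by (simp add: lyapunov_def)
  have "2 * L = 0"
  proof (rule tendsto_zero_of_inverse_weighted_integrable[OF t0_pos _ _ _ lim])
    show "continuous_on {t0..} (\<lambda>t. (norm (u' t))\<^sup>2)"
      by (intro continuous_intros continuous_on_u')
    show "(\<lambda>t. (norm (u' t))\<^sup>2 / t) integrable_on {t0..}"
      using u'_inverse_weighted_integrable by simp
  qed simp
  with lim show "((\<lambda>t. (norm (u' t))\<^sup>2) \<longlongrightarrow> 0) at_top"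
    by simp
qed

lemma grad_tendsto_0: "((\<lambda>t. norm (grad t)) \<longlongrightarrow> 0) at_top"
proof -
  have "((\<lambda>t. (1 / \<beta>) *\<^sub>R (u' t - x' t)) \<longlongrightarrow> (1 / \<beta>) *\<^sub>R (0 - 0)) at_top"
    using u'_tendsto_0 x'_tendsto_0 unfolding tendsto_norm_zero_iff by (intro tendsto_intros)
  moreover have "(1 / \<beta>) *\<^sub>R (u' t - x' t) = grad t" for t
    using \<beta>_pos by (simp add: u'_def)
  ultimately show ?thesis
    by (simp add: tendsto_norm_zero_iff)
qed

lemma vector_derivative_u:
  assumes "t \<ge> t0"
  shows "vector_derivative (\<lambda>t. x t + \<beta> *\<^sub>R integral {t0..t} (\<lambda>s. gf (x s))) (at t within {t0..})
    = u' t"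
  using vector_derivative_within[OF at_within_atLeast_neq_bot[OF assms]
      u_has_vector_derivative[OF assms]]
  by (simp add: grad_def[abs_def])

end

theorem theorem4:
  fixes f :: "'a::{real_inner,complete_space} \<Rightarrow> real"
    and gf :: "'a \<Rightarrow> 'a" and Hf :: "'a \<Rightarrow> ('a \<Rightarrow>\<^sub>L 'a)"
    and e e' x x' x'' :: "real \<Rightarrow> 'a"
    and t0 \<alpha> \<beta> :: real
  assumes t0: "t0 > 0"
    and f_grad: "\<And>y. (f has_derivative (\<lambda>h. gf y \<bullet> h)) (at y)"
    and f_hess: "\<And>y. (gf has_derivative blinfun_apply (Hf y)) (at y)"
    and f_C2: "continuous_on UNIV Hf"
    and f_convex: "convex_on UNIV f"
    and f_bdd: "bdd_below (range f)"
    and e_deriv: "\<And>t. t \<ge> t0 \<Longrightarrow> (e has_vector_derivative e' t) (at t within {t0..})"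
    and e'_cont: "continuous_on {t0..} e'"
    and e_int: "(\<lambda>t. norm (e t)) integrable_on {t0..}"
    and e'_int: "(\<lambda>t. norm (e' t)) integrable_on {t0..}"
    and \<alpha>: "\<alpha> > 0" and \<beta>: "\<beta> > 0"
    and x_deriv: "\<And>t. t \<ge> t0 \<Longrightarrow> (x has_vector_derivative x' t) (at t within {t0..})"
    and x'_deriv: "\<And>t. t \<ge> t0 \<Longrightarrow> (x' has_vector_derivative x'' t) (at t within {t0..})"
    and ode: "\<And>t. t \<ge> t0 \<Longrightarrow>
        x'' t + (\<alpha> / t) *\<^sub>R x' t
        + \<beta> *\<^sub>R vector_derivative (\<lambda>s. gf (x s) + e s) (at t within {t0..})
        + gf (x t) + e t = 0"
  defines "u \<equiv> (\<lambda>t. x t + \<beta> *\<^sub>R integral {t0..t} (\<lambda>s. gf (x s)))"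
  shows "(bdd_above ((\<lambda>t. norm (vector_derivative u (at t within {t0..}))) ` {t0..}))
     \<and> ((\<lambda>t. (1 / t) * (norm (x' t))\<^sup>2) integrable_on {t0..})
     \<and> ((\<lambda>t. (norm (gf (x t)))\<^sup>2) integrable_on {t0..})
     \<and> ((\<lambda>t. (1 / t) * (norm (vector_derivative u (at t within {t0..})))\<^sup>2) integrable_on {t0..})
     \<and> (((\<lambda>t. norm (vector_derivative u (at t within {t0..}))) \<longlongrightarrow> 0) at_top)
     \<and> (((\<lambda>t. norm (x' t)) \<longlongrightarrow> 0) at_top)
     \<and> (((\<lambda>t. norm (gf (x t))) \<longlongrightarrow> 0) at_top)
     \<and> (((\<lambda>t. f (x t)) \<longlongrightarrow> (INF y. f y)) at_top)"
proof -
  interpret inertial_hessian_damping f gf Hf e e' x x' x'' t0 \<alpha> \<beta>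
    using t0 f_grad f_hess f_convex f_bdd e_deriv e'_cont e_int e'_int \<alpha> \<beta> x_deriv x'_deriv ode
    by unfold_locales
  have u': "vector_derivative u (at t within {t0..}) = u' t" if "t \<ge> t0" for t
    unfolding u_def using that by (rule vector_derivative_u)
  obtain B where "\<And>t. t \<ge> t0 \<Longrightarrow> norm (u' t) \<le> B"
    using u'_bounded by blast
  then have "bdd_above ((\<lambda>t. norm (vector_derivative u (at t within {t0..}))) ` {t0..})"
    by (auto simp: u' intro!: bdd_aboveI[of _ B])
  moreover have "(\<lambda>t. (1 / t) * (norm (vector_derivative u (at t within {t0..})))\<^sup>2)
      integrable_on {t0..}"
    using u'_inverse_weighted_integrable by (rule integrable_eq) (simp add: u')
  moreover have "((\<lambda>t. norm (vector_derivative u (at t within {t0..}))) \<longlongrightarrow> 0) at_top"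
    using u'_tendsto_0 by (rule Lim_transform_eventually)
      (auto simp: u' eventually_at_top_linorder intro!: exI[of _ t0])
  ultimately show ?thesis
    using x'_inverse_weighted_integrable grad_square_integrable x'_tendsto_0 grad_tendsto_0
      f_x_tendsto_inf
    by (simp add: grad_def inf_f_def)
qed

end
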